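(* Let $\mathcal{E}\in\mathbb{R}^{N_1\times N_2\times N_3}$ be any tensor with at most $\mathrm{deg}_{max}(\mathcal{E})$ nonzero entries per horizontal/lateral slice and at least $\mathrm{deg}_{min}(\mathcal{E})$ nonzero entries per horizontal/lateral slice. Then $$\mathrm{deg}_{min}(\mathcal{E})\le\mu(\mathcal{E})\le\mathrm{deg}_{max}(\mathcal{E}).$$
   Context: Horizontal slices of $\mathcal{E}$ are $\mathcal{E}(i,:,:)$, $1\le i\le N_1$, and lateral slices are $\mathcal{E}(:,j,:)$, $1\le j\le N_2$. For $\mathcal{A}\in\mathbb{R}^{N_1\times N_2\times N_3}$ with frontal slices $A^{(k)}=\mathcal{A}(:,:,k)$, $\mathrm{bcirc}(\mathcal{A})\in\mathbb{R}^{N_1N_3\times N_2N_3}$ is the block circulant matrix whose $(i,j)$ block is $A^{(((i-j)\bmod N_3)+1)}$, and the tensor spectral norm is $\|\mathcal{A}\|=\|\mathrm{bcirc}(\mathcal{A})\|$ (largest singular value). $\|\mathcal{A}\|_\infty$ is the maximum absolute entry. $\Omega(\mathcal{E})=\{\mathcal{N}\in\mathbb{R}^{N_1\times N_2\times N_3}:\mathrm{support}(\mathcal{N})\subseteq\mathrm{support}(\mathcal{E})\}$, support being the set of indices of nonzero entries, and $\mu(\mathcal{E})=\max_{\mathcal{N}\in\Omega(\mathcal{E}),\|\mathcal{N}\|_\infty\le1}\|\mathcal{N}\|$. *)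

theory Defs
  imports Complex_Main
begin

text \<open>A real tensor of size N1 x N2 x N3 is represented as a function
  nat => nat => nat => real, of which only the entries with indices
  i < N1, j < N2, k < N3 (0-based) are relevant.\<close>

type_synonym tensor3 = "nat \<Rightarrow> nat \<Rightarrow> nat \<Rightarrow> real"

text \<open>Row index p*N1 + i (p < N3, i < N1), column index
  q*N2 + j (q < N3, j < N2); the (p,q) block is the frontal slice
  A(:,:,(p - q) mod N3) (0-based).\<close>

definition bcirc :: "nat \<Rightarrow> nat \<Rightarrow> nat \<Rightarrow> tensor3 \<Rightarrow> nat \<Rightarrow> nat \<Rightarrow> real" where
  "bcirc N1 N2 N3 A r c =
     A (r mod N1) (c mod N2) (nat ((int (r div N1) - int (c div N2)) mod int N3))"

definition mat_spec_norm :: "nat \<Rightarrow> nat \<Rightarrow> (nat \<Rightarrow> nat \<Rightarrow> real) \<Rightarrow> real" where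
  "mat_spec_norm m n B =
     Sup {sqrt (\<Sum>r<m. (\<Sum>c<n. B r c * x c)\<^sup>2) | x. (\<Sum>c<n. (x c)\<^sup>2) \<le> 1}"

definition tensor_spec_norm :: "nat \<Rightarrow> nat \<Rightarrow> nat \<Rightarrow> tensor3 \<Rightarrow> real" where
  "tensor_spec_norm N1 N2 N3 A = mat_spec_norm (N1 * N3) (N2 * N3) (bcirc N1 N2 N3 A)"

text \<open>Omega(E) intersected with the unit ball of the max-entry norm:
  tensors supported in support(E) with all entries of absolute value at most 1.\<close>

definition Omega_inf :: "nat \<Rightarrow> nat \<Rightarrow> nat \<Rightarrow> tensor3 \<Rightarrow> tensor3 set" where
  "Omega_inf N1 N2 N3 E =
     {N. \<forall>i<N1. \<forall>j<N2. \<forall>k<N3. (E i j k = 0 \<longrightarrow> N i j k = 0) \<and> \<bar>N i j k\<bar> \<le> 1}"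

definition mu :: "nat \<Rightarrow> nat \<Rightarrow> nat \<Rightarrow> tensor3 \<Rightarrow> real" where
  "mu N1 N2 N3 E = Sup (tensor_spec_norm N1 N2 N3 ` Omega_inf N1 N2 N3 E)"

definition nnz_horiz :: "nat \<Rightarrow> nat \<Rightarrow> tensor3 \<Rightarrow> nat \<Rightarrow> nat" where
  "nnz_horiz N2 N3 E i = card {(j, k). j < N2 \<and> k < N3 \<and> E i j k \<noteq> 0}"

definition nnz_lat :: "nat \<Rightarrow> nat \<Rightarrow> tensor3 \<Rightarrow> nat \<Rightarrow> nat" where
  "nnz_lat N1 N3 E j = card {(i, k). i < N1 \<and> k < N3 \<and> E i j k \<noteq> 0}"

definition slice_counts :: "nat \<Rightarrow> nat \<Rightarrow> nat \<Rightarrow> tensor3 \<Rightarrow> nat set" where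
  "slice_counts N1 N2 N3 E = nnz_horiz N2 N3 E ` {..<N1} \<union> nnz_lat N1 N3 E ` {..<N2}"

definition deg_max :: "nat \<Rightarrow> nat \<Rightarrow> nat \<Rightarrow> tensor3 \<Rightarrow> nat" where
  "deg_max N1 N2 N3 E = Max (slice_counts N1 N2 N3 E)"

definition deg_min :: "nat \<Rightarrow> nat \<Rightarrow> nat \<Rightarrow> tensor3 \<Rightarrow> nat" where
  "deg_min N1 N2 N3 E = Min (slice_counts N1 N2 N3 E)"

end

theory Submission
  imports Defs "HOL-Analysis.Convex"
begin

text \<open>Each row of bcirc(N) is a rearrangement of a horizontal slice of N and each column one of a
  lateral slice. For N in Omega(E) with entries bounded by 1, all absolute row and column sums of
  bcirc(N) are therefore at most deg_max, and the Schur test bounds its spectral norm by deg_max.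
  Conversely, the 0/1 indicator of the support of E lies in Omega(E); its bcirc has all row and
  column sums at least deg_min, and testing it on the constant unit vector gives norm at least
  deg_min.\<close>

lemma sum_lessThan_mult:
  fixes n m :: nat
  shows "(\<Sum>c<n * m. f c) = (\<Sum>q<m. \<Sum>j<n. f (q * n + j))"
proof -
  have "(\<Sum>c<n * m. f c) = (\<Sum>q<m. \<Sum>c\<in>{q * n..<q * n + n}. f c)"
    using sum.nat_group[where g = f and k = n and n = m] by (simp add: mult.commute)
  also have "\<dots> = (\<Sum>q<m. \<Sum>j<n. f (q * n + j))"
    by (simp add: sum.shift_bounds_nat_ivl[of _ 0 "q * n" for q, simplified] atLeast0LessThan add.commute)
  finally show ?thesis .
qed

lemma sum_mod_diff_left:
  "(\<Sum>q<N. f (nat ((int p - int q) mod int N))) = (\<Sum>k<N. f k)"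
  by (rule sum.reindex_bij_witness[where i = "\<lambda>k. nat ((int p - int k) mod int N)"
                                      and j = "\<lambda>q. nat ((int p - int q) mod int N)"])
     (auto simp: mod_diff_right_eq nat_less_iff)

lemma sum_mod_diff_right:
  "(\<Sum>p<N. f (nat ((int p - int q) mod int N))) = (\<Sum>k<N. f k)"
  by (rule sum.reindex_bij_witness[where i = "\<lambda>k. nat ((int k + int q) mod int N)"
                                      and j = "\<lambda>p. nat ((int p - int q) mod int N)"])
     (auto simp: mod_diff_left_eq mod_add_left_eq nat_less_iff)

lemma sum_bcirc_row:
  "(\<Sum>c<N2 * N3. g (bcirc N1 N2 N3 A r c)) = (\<Sum>j<N2. \<Sum>k<N3. g (A (r mod N1) j k))"
proof -
  have "(\<Sum>c<N2 * N3. g (bcirc N1 N2 N3 A r c))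
      = (\<Sum>j<N2. \<Sum>q<N3. g (A (r mod N1) j (nat ((int (r div N1) - int q) mod int N3))))"
    by (simp add: sum_lessThan_mult bcirc_def sum.swap[of _ "{..<N3}"])
  then show ?thesis
    by (simp add: sum_mod_diff_left[where f = "\<lambda>k. g (A (r mod N1) _ k)"])
qed

lemma sum_bcirc_col:
  "(\<Sum>r<N1 * N3. g (bcirc N1 N2 N3 A r c)) = (\<Sum>i<N1. \<Sum>k<N3. g (A i (c mod N2) k))"
proof -
  have "(\<Sum>r<N1 * N3. g (bcirc N1 N2 N3 A r c))
      = (\<Sum>i<N1. \<Sum>p<N3. g (A i (c mod N2) (nat ((int p - int (c div N2)) mod int N3))))"
    by (simp add: sum_lessThan_mult bcirc_def sum.swap[of _ "{..<N3}"])
  then show ?thesis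
    by (simp add: sum_mod_diff_right[where f = "\<lambda>k. g (A _ (c mod N2) k)"])
qed

lemma Cauchy_Schwarz_ineq_sum_weighted:
  fixes w y :: "'a \<Rightarrow> real"
  assumes "\<And>i. i \<in> I \<Longrightarrow> 0 \<le> w i"
  shows "(\<Sum>i\<in>I. w i * y i)\<^sup>2 \<le> (\<Sum>i\<in>I. w i) * (\<Sum>i\<in>I. w i * (y i)\<^sup>2)"
proof -
  have "(\<Sum>i\<in>I. sqrt (w i) * (sqrt (w i) * y i))\<^sup>2
     \<le> (\<Sum>i\<in>I. (sqrt (w i))\<^sup>2) * (\<Sum>i\<in>I. (sqrt (w i) * y i)\<^sup>2)"
    by (rule Cauchy_Schwarz_ineq_sum)
  also have "\<dots> = (\<Sum>i\<in>I. w i) * (\<Sum>i\<in>I. w i * (y i)\<^sup>2)"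
    using assms by (simp add: power_mult_distrib)
  finally show ?thesis
    using assms by (simp add: mult.assoc[symmetric])
qed

lemma schur_test:
  fixes B :: "nat \<Rightarrow> nat \<Rightarrow> real"
  assumes rows: "\<And>r. r < m \<Longrightarrow> (\<Sum>c<n. \<bar>B r c\<bar>) \<le> R"
    and cols: "\<And>c. c < n \<Longrightarrow> (\<Sum>r<m. \<bar>B r c\<bar>) \<le> C"
    and "0 \<le> R"
  shows "(\<Sum>r<m. (\<Sum>c<n. B r c * x c)\<^sup>2) \<le> R * C * (\<Sum>c<n. (x c)\<^sup>2)"
proof -
  have row: "(\<Sum>c<n. B r c * x c)\<^sup>2 \<le> R * (\<Sum>c<n. \<bar>B r c\<bar> * (x c)\<^sup>2)" if "r < m" for r
  proof -
    have "(\<Sum>c<n. B r c * x c)\<^sup>2 \<le> (\<Sum>c<n. \<bar>B r c\<bar> * \<bar>x c\<bar>)\<^sup>2"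
      unfolding abs_le_square_iff[symmetric]
      using sum_abs[of "\<lambda>c. B r c * x c" "{..<n}"] by (simp add: abs_mult)
    also have "\<dots> \<le> (\<Sum>c<n. \<bar>B r c\<bar>) * (\<Sum>c<n. \<bar>B r c\<bar> * \<bar>x c\<bar>\<^sup>2)"
      by (rule Cauchy_Schwarz_ineq_sum_weighted) simp
    also have "\<dots> \<le> R * (\<Sum>c<n. \<bar>B r c\<bar> * (x c)\<^sup>2)"
      by (auto intro!: mult_right_mono rows that sum_nonneg)
    finally show ?thesis .
  qed
  have "(\<Sum>r<m. (\<Sum>c<n. B r c * x c)\<^sup>2) \<le> (\<Sum>r<m. R * (\<Sum>c<n. \<bar>B r c\<bar> * (x c)\<^sup>2))"
    by (intro sum_mono row) simp
  also have "\<dots> = R * (\<Sum>c<n. (\<Sum>r<m. \<bar>B r c\<bar>) * (x c)\<^sup>2)"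
    by (simp add: sum_distrib_left sum_distrib_right sum.swap[of _ "{..<m}"])
  also have "\<dots> \<le> R * (\<Sum>c<n. C * (x c)\<^sup>2)"
    by (intro mult_left_mono sum_mono mult_right_mono cols \<open>0 \<le> R\<close>) auto
  finally show ?thesis
    by (simp add: sum_distrib_left mult.assoc)
qed

lemma schur_test_unit_vector:
  fixes B :: "nat \<Rightarrow> nat \<Rightarrow> real"
  assumes rows: "\<And>r. r < m \<Longrightarrow> (\<Sum>c<n. \<bar>B r c\<bar>) \<le> R"
    and cols: "\<And>c. c < n \<Longrightarrow> (\<Sum>r<m. \<bar>B r c\<bar>) \<le> C"
    and "0 \<le> R" "0 \<le> C" and x: "(\<Sum>c<n. (x c)\<^sup>2) \<le> 1"
  shows "sqrt (\<Sum>r<m. (\<Sum>c<n. B r c * x c)\<^sup>2) \<le> sqrt (R * C)"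
proof -
  have "(\<Sum>r<m. (\<Sum>c<n. B r c * x c)\<^sup>2) \<le> R * C * (\<Sum>c<n. (x c)\<^sup>2)"
    by (rule schur_test[OF rows cols \<open>0 \<le> R\<close>])
  also have "\<dots> \<le> R * C"
    using x \<open>0 \<le> R\<close> \<open>0 \<le> C\<close> by (simp add: mult_left_le)
  finally show ?thesis
    by simp
qed

lemma mat_spec_norm_le_schur:
  fixes B :: "nat \<Rightarrow> nat \<Rightarrow> real"
  assumes "\<And>r. r < m \<Longrightarrow> (\<Sum>c<n. \<bar>B r c\<bar>) \<le> R"
    and "\<And>c. c < n \<Longrightarrow> (\<Sum>r<m. \<bar>B r c\<bar>) \<le> C"
    and "0 \<le> R" "0 \<le> C"
  shows "mat_spec_norm m n B \<le> sqrt (R * C)"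
  unfolding mat_spec_norm_def
  using schur_test_unit_vector[OF assms] by (intro cSup_least) (auto intro!: exI[of _ "\<lambda>_. 0"])

lemma mat_spec_norm_ge:
  fixes B :: "nat \<Rightarrow> nat \<Rightarrow> real"
  assumes "(\<Sum>c<n. (x c)\<^sup>2) \<le> 1"
  shows "sqrt (\<Sum>r<m. (\<Sum>c<n. B r c * x c)\<^sup>2) \<le> mat_spec_norm m n B"
proof -
  define T where "T = (\<Sum>r<m. \<Sum>c<n. \<bar>B r c\<bar>)"
  have T_swap: "T = (\<Sum>c<n. \<Sum>r<m. \<bar>B r c\<bar>)"
    unfolding T_def by (rule sum.swap)
  have rows: "(\<Sum>c<n. \<bar>B r c\<bar>) \<le> T" if "r < m" for r
    unfolding T_def using that by (intro member_le_sum) (auto intro: sum_nonneg)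
  have cols: "(\<Sum>r<m. \<bar>B r c\<bar>) \<le> T" if "c < n" for c
    unfolding T_swap using that by (intro member_le_sum) (auto intro: sum_nonneg)
  have "0 \<le> T"
    unfolding T_def by (intro sum_nonneg) auto
  then have "bdd_above {sqrt (\<Sum>r<m. (\<Sum>c<n. B r c * x c)\<^sup>2) | x. (\<Sum>c<n. (x c)\<^sup>2) \<le> 1}"
    using schur_test_unit_vector[OF rows cols] by (intro bdd_aboveI) auto
  then show ?thesis
    unfolding mat_spec_norm_def by (rule cSup_upper[rotated]) (use assms in blast)
qed

lemma mat_spec_norm_ge_line_sums:
  fixes B :: "nat \<Rightarrow> nat \<Rightarrow> real"
  assumes rows: "\<And>r. r < m \<Longrightarrow> a \<le> (\<Sum>c<n. B r c)"
    and cols: "\<And>c. c < n \<Longrightarrow> b \<le> (\<Sum>r<m. B r c)"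
    and "0 \<le> a" "0 \<le> b" "0 < m" "0 < n"
  shows "sqrt (a * b) \<le> mat_spec_norm m n B"
proof -
  define x where "x = (\<lambda>c::nat. 1 / sqrt n)"
  define S where "S = (\<Sum>r<m. \<Sum>c<n. B r c)"
  have "(\<Sum>r<m. a) \<le> S"
    unfolding S_def by (intro sum_mono rows) simp
  moreover have "(\<Sum>c<n. b) \<le> S"
    unfolding S_def sum.swap[where A = "{..<m}"] by (intro sum_mono cols) simp
  ultimately have "(m * a) * (n * b) \<le> S\<^sup>2"
    unfolding power2_eq_square using \<open>0 \<le> a\<close> \<open>0 \<le> b\<close>
    by (intro mult_mono) (auto intro: order_trans[rotated])
  also have "S\<^sup>2 = n * (\<Sum>r<m. \<Sum>c<n. B r c * x c)\<^sup>2"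
    using \<open>0 < n\<close> by (simp add: S_def x_def power_divide flip: sum_divide_distrib)
  also have "\<dots> \<le> n * (m * (\<Sum>r<m. (\<Sum>c<n. B r c * x c)\<^sup>2))"
    using sum_squared_le_sum_of_squares[of "\<lambda>r. \<Sum>c<n. B r c * x c" "{..<m}"]
    by (intro mult_left_mono) (auto simp: mult.commute)
  finally have "a * b \<le> (\<Sum>r<m. (\<Sum>c<n. B r c * x c)\<^sup>2)"
    using \<open>0 < m\<close> \<open>0 < n\<close> by (simp add: algebra_simps)
  then have "sqrt (a * b) \<le> sqrt (\<Sum>r<m. (\<Sum>c<n. B r c * x c)\<^sup>2)"
    by simp
  also have "\<dots> \<le> mat_spec_norm m n B"
    by (rule mat_spec_norm_ge) (use \<open>0 < n\<close> in \<open>simp add: x_def power_divide\<close>)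
  finally show ?thesis .
qed

lemma real_nnz_horiz:
  "real (nnz_horiz N2 N3 E i) = (\<Sum>j<N2. \<Sum>k<N3. of_bool (E i j k \<noteq> 0))"
proof -
  have "{(j, k). j < N2 \<and> k < N3 \<and> E i j k \<noteq> 0} = ({..<N2} \<times> {..<N3}) \<inter> {(j, k). E i j k \<noteq> 0}"
    by auto
  then have "real (nnz_horiz N2 N3 E i) = (\<Sum>(j, k) \<in> {..<N2} \<times> {..<N3}. of_bool (E i j k \<noteq> 0))"
    by (simp add: nnz_horiz_def case_prod_unfold)
  then show ?thesis
    by (simp only: sum.cartesian_product)
qed

lemma real_nnz_lat:
  "real (nnz_lat N1 N3 E j) = (\<Sum>i<N1. \<Sum>k<N3. of_bool (E i j k \<noteq> 0))"
proof -
  have "{(i, k). i < N1 \<and> k < N3 \<and> E i j k \<noteq> 0} = ({..<N1} \<times> {..<N3}) \<inter> {(i, k). E i j k \<noteq> 0}"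
    by auto
  then have "real (nnz_lat N1 N3 E j) = (\<Sum>(i, k) \<in> {..<N1} \<times> {..<N3}. of_bool (E i j k \<noteq> 0))"
    by (simp add: nnz_lat_def case_prod_unfold)
  then show ?thesis
    by (simp only: sum.cartesian_product)
qed

lemma deg_min_le:
  "s \<in> slice_counts N1 N2 N3 E \<Longrightarrow> deg_min N1 N2 N3 E \<le> s"
  unfolding deg_min_def by (rule Min_le) (simp_all add: slice_counts_def)

lemma le_deg_max:
  "s \<in> slice_counts N1 N2 N3 E \<Longrightarrow> s \<le> deg_max N1 N2 N3 E"
  unfolding deg_max_def by (rule Max_ge) (simp_all add: slice_counts_def)

definition support_indicator :: "tensor3 \<Rightarrow> tensor3" where
  "support_indicator E i j k = of_bool (E i j k \<noteq> 0)"

lemma support_indicator_in_Omega_inf: "support_indicator E \<in> Omega_inf N1 N2 N3 E"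
  by (simp add: Omega_inf_def support_indicator_def)

lemma Omega_inf_abs_le_support_indicator:
  "\<lbrakk>N \<in> Omega_inf N1 N2 N3 E; i < N1; j < N2; k < N3\<rbrakk> \<Longrightarrow> \<bar>N i j k\<bar> \<le> support_indicator E i j k"
  by (simp add: Omega_inf_def support_indicator_def)

lemma sum_bcirc_row_abs_le_nnz_horiz:
  assumes "N \<in> Omega_inf N1 N2 N3 E" "0 < N1"
  shows "(\<Sum>c<N2 * N3. \<bar>bcirc N1 N2 N3 N r c\<bar>) \<le> nnz_horiz N2 N3 E (r mod N1)"
proof -
  have "(\<Sum>c<N2 * N3. \<bar>bcirc N1 N2 N3 N r c\<bar>) = (\<Sum>j<N2. \<Sum>k<N3. \<bar>N (r mod N1) j k\<bar>)"
    by (rule sum_bcirc_row)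
  also have "\<dots> \<le> (\<Sum>j<N2. \<Sum>k<N3. support_indicator E (r mod N1) j k)"
    using assms by (intro sum_mono Omega_inf_abs_le_support_indicator) auto
  finally show ?thesis
    by (simp add: real_nnz_horiz support_indicator_def)
qed

lemma sum_bcirc_col_abs_le_nnz_lat:
  assumes "N \<in> Omega_inf N1 N2 N3 E" "0 < N2"
  shows "(\<Sum>r<N1 * N3. \<bar>bcirc N1 N2 N3 N r c\<bar>) \<le> nnz_lat N1 N3 E (c mod N2)"
proof -
  have "(\<Sum>r<N1 * N3. \<bar>bcirc N1 N2 N3 N r c\<bar>) = (\<Sum>i<N1. \<Sum>k<N3. \<bar>N i (c mod N2) k\<bar>)"
    by (rule sum_bcirc_col)
  also have "\<dots> \<le> (\<Sum>i<N1. \<Sum>k<N3. support_indicator E i (c mod N2) k)"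
    using assms by (intro sum_mono Omega_inf_abs_le_support_indicator) auto
  finally show ?thesis
    by (simp add: real_nnz_lat support_indicator_def)
qed

lemma tensor_spec_norm_le_deg_max:
  assumes "N \<in> Omega_inf N1 N2 N3 E" "0 < N1" "0 < N2"
  shows "tensor_spec_norm N1 N2 N3 N \<le> deg_max N1 N2 N3 E"
proof -
  let ?D = "real (deg_max N1 N2 N3 E)"
  have rows: "(\<Sum>c<N2 * N3. \<bar>bcirc N1 N2 N3 N r c\<bar>) \<le> ?D" for r
    using sum_bcirc_row_abs_le_nnz_horiz[OF assms(1,2), of r]
      le_deg_max[of "nnz_horiz N2 N3 E (r mod N1)" N1 N2 N3 E] \<open>0 < N1\<close>
    by (simp add: slice_counts_def)
  have cols: "(\<Sum>r<N1 * N3. \<bar>bcirc N1 N2 N3 N r c\<bar>) \<le> ?D" for c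
    using sum_bcirc_col_abs_le_nnz_lat[OF assms(1,3), of c]
      le_deg_max[of "nnz_lat N1 N3 E (c mod N2)" N1 N2 N3 E] \<open>0 < N2\<close>
    by (simp add: slice_counts_def)
  have "tensor_spec_norm N1 N2 N3 N \<le> sqrt (?D * ?D)"
    unfolding tensor_spec_norm_def by (rule mat_spec_norm_le_schur[OF rows cols]) simp_all
  then show ?thesis
    by simp
qed

lemma sum_bcirc_support_indicator_row:
  "(\<Sum>c<N2 * N3. bcirc N1 N2 N3 (support_indicator E) r c) = nnz_horiz N2 N3 E (r mod N1)"
  using sum_bcirc_row[where g = "\<lambda>x. x"] by (simp add: real_nnz_horiz support_indicator_def)

lemma sum_bcirc_support_indicator_col:
  "(\<Sum>r<N1 * N3. bcirc N1 N2 N3 (support_indicator E) r c) = nnz_lat N1 N3 E (c mod N2)"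
  using sum_bcirc_col[where g = "\<lambda>x. x"] by (simp add: real_nnz_lat support_indicator_def)

lemma deg_min_le_tensor_spec_norm_support_indicator:
  assumes "0 < N1" "0 < N2" "0 < N3"
  shows "deg_min N1 N2 N3 E \<le> tensor_spec_norm N1 N2 N3 (support_indicator E)"
proof -
  let ?d = "real (deg_min N1 N2 N3 E)"
  have rows: "?d \<le> (\<Sum>c<N2 * N3. bcirc N1 N2 N3 (support_indicator E) r c)" for r
    using deg_min_le[of "nnz_horiz N2 N3 E (r mod N1)" N1 N2 N3 E] \<open>0 < N1\<close>
    by (simp add: slice_counts_def sum_bcirc_support_indicator_row)
  have cols: "?d \<le> (\<Sum>r<N1 * N3. bcirc N1 N2 N3 (support_indicator E) r c)" for c
    using deg_min_le[of "nnz_lat N1 N3 E (c mod N2)" N1 N2 N3 E] \<open>0 < N2\<close>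
    by (simp add: slice_counts_def sum_bcirc_support_indicator_col)
  have "sqrt (?d * ?d) \<le> tensor_spec_norm N1 N2 N3 (support_indicator E)"
    unfolding tensor_spec_norm_def using assms by (intro mat_spec_norm_ge_line_sums[OF rows cols]) simp_all
  then show ?thesis
    by simp
qed

theorem lemma4:
  fixes N1 N2 N3 :: nat and E :: tensor3
  assumes "N1 \<ge> 1" and "N2 \<ge> 1" and "N3 \<ge> 1"
  shows "real (deg_min N1 N2 N3 E) \<le> mu N1 N2 N3 E \<and>
         mu N1 N2 N3 E \<le> real (deg_max N1 N2 N3 E)"
proof
  have pos: "0 < N1" "0 < N2" "0 < N3"
    using assms by simp_all
  have bound: "tensor_spec_norm N1 N2 N3 N \<le> deg_max N1 N2 N3 E" if "N \<in> Omega_inf N1 N2 N3 E" for N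
    using tensor_spec_norm_le_deg_max[OF that pos(1,2)] .
  have "deg_min N1 N2 N3 E \<le> tensor_spec_norm N1 N2 N3 (support_indicator E)"
    by (rule deg_min_le_tensor_spec_norm_support_indicator[OF pos])
  also have "\<dots> \<le> mu N1 N2 N3 E"
    unfolding mu_def by (rule cSUP_upper[OF support_indicator_in_Omega_inf bdd_aboveI2[OF bound]])
  finally show "real (deg_min N1 N2 N3 E) \<le> mu N1 N2 N3 E" .
  show "mu N1 N2 N3 E \<le> deg_max N1 N2 N3 E"
    unfolding mu_def using bound support_indicator_in_Omega_inf[of E N1 N2 N3]
    by (intro cSUP_least) auto
qed

end
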